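(* Let $\omega_0,\alpha,\omega_d>0$, $J_0=\begin{bmatrix}0&\omega_0\\-\omega_0&0\end{bmatrix}$, $\tilde\Lambda=\begin{bmatrix}0&0\\0&-\frac{\alpha}{2}\end{bmatrix}$, and consider the system on $\mathbb{R}^3$ $$\dot{\bar z}=(J_0+\tilde\Lambda)\bar z+(e^{\hat d}-1)\tilde\Lambda\bar z,\qquad \dot{\hat d}=-\omega_d(e^{\hat d}-1).$$ Let $$P=\begin{bmatrix}\frac{\alpha}{4\omega_0^2}+\frac{2}{\alpha}&\frac{1}{2\omega_0}\\ \frac{1}{2\omega_0}&\frac{2}{\alpha}\end{bmatrix},\qquad G=P\tilde\Lambda+\tilde\Lambda^\top P,\qquad b=\frac{\|G\|^2}{2\lambda_{\min}(P)},$$ where $\|G\|$ is the spectral norm and $\lambda_{\min}(P)$ the smallest eigenvalue of $P$. Then $P=P^\top>0$, $P(J_0+\tilde\Lambda)+(J_0+\tilde\Lambda)^\top P=-I$, and the function $$V(\bar z,\hat d)=\ln(1+\bar z^\top P\bar z)+\frac{b}{\omega_d}(e^{\hat d}-\hat d-1)$$ satisfies, along trajectories of the system, for all $(\bar z,\hat d)\in\mathbb{R}^2\times\mathbb{R}$, $$\dot V\le\frac{-\frac12|\bar z|^2-b(e^{\hat d}-1)^2}{1+\bar z^\top P\bar z}.$$ *)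

theory Defs
  imports "HOL-Analysis.Analysis"
begin

definition J0 :: "real \<Rightarrow> real^2^2" where
  "J0 \<omega>0 = vector [vector [0, \<omega>0], vector [-\<omega>0, 0]]"

definition Lam :: "real \<Rightarrow> real^2^2" where
  "Lam \<alpha> = vector [vector [0, 0], vector [0, -\<alpha>/2]]"

definition Pmat :: "real \<Rightarrow> real \<Rightarrow> real^2^2" where
  "Pmat \<omega>0 \<alpha> = vector [vector [\<alpha>/(4*\<omega>0^2) + 2/\<alpha>, 1/(2*\<omega>0)],
                            vector [1/(2*\<omega>0), 2/\<alpha>]]"

definition spec_norm :: "real^'n^'m \<Rightarrow> real" where
  "spec_norm A = onorm (\<lambda>x. A *v x)"

definition eigenvalues :: "real^'n^'n \<Rightarrow> real set" where
  "eigenvalues A = {l. \<exists>v. v \<noteq> 0 \<and> A *v v = l *\<^sub>R v}"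

definition lambda_min :: "real^'n^'n \<Rightarrow> real" where
  "lambda_min A = Min (eigenvalues A)"

definition pos_def :: "real^'n^'n \<Rightarrow> bool" where
  "pos_def A \<longleftrightarrow> (\<forall>x. x \<noteq> 0 \<longrightarrow> x \<bullet> (A *v x) > 0)"

end

theory Submission
  imports Defs
begin

text \<open>
  The Lyapunov equation turns the quadratic part of the derivative of \<open>ln (1 + z\<^sup>T P z)\<close> into
  \<open>-|z|\<^sup>2 + s z\<^sup>T G z\<close> with \<open>s = e\<^sup>d - 1\<close>, while the \<open>d\<close>-part of \<open>V\<close> contributes exactly
  \<open>-b s\<^sup>2\<close>. The indefinite cross term is split by Young's inequality into \<open>|z|\<^sup>2/2\<close>
  and \<open>b s\<^sup>2 \<lambda>\<^sub>m\<^sub>i\<^sub>n(P) |z|\<^sup>2 \<le> b s\<^sup>2 z\<^sup>T P z\<close>; the logarithm is what lets the latter be absorbed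
  by \<open>-b s\<^sup>2 = -b s\<^sup>2 (1 + z\<^sup>T P z) / (1 + z\<^sup>T P z)\<close>. Nothing here depends on the dimension:
  any \<open>P\<close> solving the Lyapunov equation with a positive smallest eigenvalue will do.
\<close>

lemma quadratic_form_matrix_mult_add:
  fixes P M :: "real^'n^'n"
  shows "z \<bullet> (P *v (M *v z)) + (M *v z) \<bullet> (P *v z) = z \<bullet> ((P ** M + transpose M ** P) *v z)"
  by (simp add: matrix_vector_mult_add_rdistrib matrix_vector_mul_assoc[symmetric] inner_add_right
      transpose_matrix_vector dot_lmul_matrix inner_commute[of z]) (simp add: inner_commute)

lemma quadratic_form_abs_le_onorm:
  fixes G :: "real^'n^'n"
  shows "\<bar>z \<bullet> (G *v z)\<bar> \<le> onorm ((*v) G) * (norm z)^2"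
proof -
  have "\<bar>z \<bullet> (G *v z)\<bar> \<le> norm z * norm (G *v z)" by (rule Cauchy_Schwarz_ineq2)
  also have "\<dots> \<le> norm z * (onorm ((*v) G) * norm z)"
    by (rule mult_left_mono[OF onorm[OF matrix_vector_mul_bounded_linear]]) simp
  finally show ?thesis by (simp add: power2_eq_square algebra_simps)
qed

lemma has_derivative_ln_one_plus_quadratic_form:
  fixes P :: "real^'n^'n"
  assumes "z \<bullet> (P *v z) \<ge> 0"
  shows "((\<lambda>p. ln (1 + p \<bullet> (P *v p))) has_derivative
           (\<lambda>h. (z \<bullet> (P *v h) + h \<bullet> (P *v z)) / (1 + z \<bullet> (P *v z)))) (at z)"
  using assms
  by (auto intro!: derivative_eq_intros bounded_linear_imp_has_derivative
        simp: divide_inverse mult.commute)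

text \<open>Here \<open>n = |z|\<^sup>2\<close>, \<open>q = z\<^sup>T P z\<close>, \<open>g = z\<^sup>T G z\<close> and \<open>N = \<parallel>G\<parallel>\<close>.\<close>

lemma cross_term_absorbed:
  fixes n g s q N l b :: real
  assumes l: "l > 0" and q: "q \<ge> l * n" and n: "n \<ge> 0" and g: "\<bar>g\<bar> \<le> N * n"
    and b: "b = N^2 / (2 * l)"
  shows "(- n + s * g) / (1 + q) - b * s^2 \<le> (- (1/2) * n - b * s^2) / (1 + q)"
proof -
  have q0: "q \<ge> 0" using l n q by (meson mult_nonneg_nonneg order.trans less_imp_le)
  have b0: "b \<ge> 0" using b l by simp
  have "s * g \<le> \<bar>s\<bar> * (N * n)" using g by (metis abs_ge_self abs_mult dual_order.trans abs_ge_zero mult_left_mono)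
  also have "\<dots> \<le> n/2 + s^2 * N^2 * n/2"
  proof -
    have "0 \<le> (\<bar>s\<bar> * N - 1)^2 * n" using n by simp
    thus ?thesis by (simp add: power2_eq_square algebra_simps)
  qed
  also have "s^2 * N^2 * n/2 = b * s^2 * (l * n)" using b l by (simp add: field_simps)
  also have "\<dots> \<le> b * s^2 * q" using q b0 by (simp add: mult_left_mono)
  finally have "s * g \<le> n/2 + b * s^2 * q" by simp
  have "(- n + s * g) / (1 + q) - b * s^2 = (- n + s * g - b * s^2 * (1 + q)) / (1 + q)"
    using q0 by (simp add: field_simps)
  also have "\<dots> \<le> (- (1/2) * n - b * s^2) / (1 + q)"
    using \<open>s * g \<le> n/2 + b * s^2 * q\<close> q0 by (intro divide_right_mono) (auto simp: algebra_simps)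
  finally show ?thesis .
qed

lemma log_lyapunov_derivative_bound:
  fixes P A L :: "real^'n^'n" and l \<omega>d :: real
  assumes lyap: "P ** A + transpose A ** P = - mat 1"
    and coercive: "\<And>z. z \<bullet> (P *v z) \<ge> l * (norm z)^2" and l: "l > 0" and \<omega>d: "\<omega>d > 0"
  defines "G \<equiv> P ** L + transpose L ** P"
  defines "b \<equiv> (onorm ((*v) G))^2 / (2 * l)"
  shows "\<exists>V'. ((\<lambda>(z, d). ln (1 + z \<bullet> (P *v z)) + b / \<omega>d * (exp d - d - 1)) has_derivative V') (at (z, d))
           \<and> V' (A *v z + (exp d - 1) *\<^sub>R (L *v z), - \<omega>d * (exp d - 1))
               \<le> (- (1/2) * (norm z)^2 - b * (exp d - 1)^2) / (1 + z \<bullet> (P *v z))"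
proof -
  define q where "q = z \<bullet> (P *v z)"
  define s where "s = exp d - 1"
  have q0: "q \<ge> 0"
    using coercive[of z] l unfolding q_def by (meson order.trans mult_nonneg_nonneg less_imp_le zero_le_power2)
  define V' where "V' = (\<lambda>h :: (real^'n) \<times> real.
    (z \<bullet> (P *v fst h) + fst h \<bullet> (P *v z)) / (1 + q) + b / \<omega>d * (s * snd h))"
  have "((\<lambda>p. ln (1 + p \<bullet> (P *v p))) has_derivative
          (\<lambda>h. (z \<bullet> (P *v h) + h \<bullet> (P *v z)) / (1 + q))) (at (fst (z, d)))"
    using has_derivative_ln_one_plus_quadratic_form[OF q0[unfolded q_def]] by (simp add: q_def)
  from has_derivative_compose[OF has_derivative_fst[OF has_derivative_ident] this]
  have has_V': "((\<lambda>(z, d). ln (1 + z \<bullet> (P *v z)) + b / \<omega>d * (exp d - d - 1)) has_derivative V') (at (z, d))"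
    unfolding split_def V'_def
  proof (rule has_derivative_add)
    show "((\<lambda>p. b / \<omega>d * (exp (snd p) - snd p - 1)) has_derivative
            (\<lambda>h. b / \<omega>d * (s * snd h))) (at (z, d))"
      using \<omega>d by (auto intro!: derivative_eq_intros simp: s_def algebra_simps)
  qed
  have "(- mat 1 :: real^'n^'n) *v z = - (mat 1 *v z)"
    by (simp add: matrix_vector_mult_def vec_eq_iff sum_negf)
  then have drift: "z \<bullet> (P *v (A *v z)) + (A *v z) \<bullet> (P *v z) = - ((norm z)^2)"
    by (simp add: quadratic_form_matrix_mult_add lyap power2_norm_eq_inner)
  have perturbation: "z \<bullet> (P *v (L *v z)) + (L *v z) \<bullet> (P *v z) = z \<bullet> (G *v z)"
    by (simp add: quadratic_form_matrix_mult_add G_def)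
  have "V' (A *v z + s *\<^sub>R (L *v z), - \<omega>d * s)
      = ((z \<bullet> (P *v (A *v z)) + (A *v z) \<bullet> (P *v z)) + s * (z \<bullet> (P *v (L *v z)) + (L *v z) \<bullet> (P *v z))) / (1 + q)
        - b * s^2"
    using \<omega>d by (simp add: V'_def matrix_vector_right_distrib inner_add_left inner_add_right
        algebra_simps power2_eq_square)
  also have "\<dots> = (- ((norm z)^2) + s * (z \<bullet> (G *v z))) / (1 + q) - b * s^2"
    by (simp only: drift perturbation)
  also have "\<dots> \<le> (- (1/2) * (norm z)^2 - b * s^2) / (1 + q)"
    using l coercive[of z] quadratic_form_abs_le_onorm[of z G]
    by (intro cross_term_absorbed[where l = l and N = "onorm ((*v) G)"]) (auto simp: q_def b_def)
  finally show ?thesis using has_V' unfolding q_def s_def by blast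
qed

definition sym_mat2 :: "real \<Rightarrow> real \<Rightarrow> real \<Rightarrow> real^2^2" where
  "sym_mat2 a c e = vector [vector [a, c], vector [c, e]]"

lemma transpose_sym_mat2: "transpose (sym_mat2 a c e) = sym_mat2 a c e"
  by (simp add: sym_mat2_def vec_eq_iff forall_2 transpose_def)

lemma inner_sym_mat2:
  "z \<bullet> (sym_mat2 a c e *v z) = a * (z$1)^2 + 2 * c * z$1 * z$2 + e * (z$2)^2"
  by (simp add: sym_mat2_def inner_vec_def matrix_vector_mult_def sum_2 power2_eq_square algebra_simps)

lemma norm_power2_vec2: "(norm (z::real^2))^2 = (z$1)^2 + (z$2)^2"
  by (simp only: power2_norm_eq_inner) (simp add: inner_vec_def sum_2 power2_eq_square)

lemma eigenvalue_sym_mat2_iff: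
  assumes c: "c \<noteq> 0"
  shows "(\<exists>v. v \<noteq> 0 \<and> sym_mat2 a c e *v v = l *\<^sub>R v) \<longleftrightarrow> (a - l) * (e - l) = c^2"
proof
  assume "\<exists>v. v \<noteq> 0 \<and> sym_mat2 a c e *v v = l *\<^sub>R v"
  then obtain v where v: "v \<noteq> 0" "sym_mat2 a c e *v v = l *\<^sub>R v" by blast
  have v1: "(a - l) * v$1 = - c * v$2" and v2: "(e - l) * v$2 = - c * v$1"
    using v(2) by (simp_all add: vec_eq_iff forall_2 sym_mat2_def matrix_vector_mult_def sum_2 algebra_simps)
  have "v$1 \<noteq> 0 \<or> v$2 \<noteq> 0" using v(1) by (auto simp: vec_eq_iff forall_2)
  then have "v$1 \<noteq> 0" "v$2 \<noteq> 0" using v1 v2 c by auto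
  moreover have "((a - l) * (e - l)) * (v$1 * v$2) = c^2 * (v$1 * v$2)"
    using arg_cong2[OF v1 v2, of "(*)"] by (simp add: power2_eq_square algebra_simps)
  ultimately show "(a - l) * (e - l) = c^2" by simp
next
  assume "(a - l) * (e - l) = c^2"
  then have "sym_mat2 a c e *v vector [c, l - a] = l *\<^sub>R vector [c, l - a]"
    by (simp add: vec_eq_iff forall_2 sym_mat2_def matrix_vector_mult_def sum_2 power2_eq_square algebra_simps)
  moreover have "(vector [c, l - a] :: real^2) $ 1 = c" by simp
  then have "vector [c, l - a] \<noteq> (0 :: real^2)" using c by (metis zero_index)
  ultimately show "\<exists>v. v \<noteq> 0 \<and> sym_mat2 a c e *v v = l *\<^sub>R v" by blast
qed

lemma sym_mat2_characteristic_eq_iff: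
  fixes a c e l :: real
  defines "r \<equiv> sqrt ((a - e)^2 / 4 + c^2)"
  shows "(a - l) * (e - l) = c^2 \<longleftrightarrow> l = (a + e)/2 - r \<or> l = (a + e)/2 + r"
proof -
  have "r^2 = (a - e)^2 / 4 + c^2" by (simp add: r_def)
  then have "(a - l) * (e - l) - c^2 = (l - (a + e)/2)^2 - r^2"
    by (simp add: power2_eq_square field_simps)
  then have "(a - l) * (e - l) = c^2 \<longleftrightarrow> (l - (a + e)/2)^2 = r^2" by auto
  also have "\<dots> \<longleftrightarrow> l - (a + e)/2 = r \<or> l - (a + e)/2 = - r"
    by (simp add: power2_eq_iff)
  finally show ?thesis by auto
qed

lemma lambda_min_sym_mat2:
  assumes "c \<noteq> 0"
  shows "lambda_min (sym_mat2 a c e) = (a + e)/2 - sqrt ((a - e)^2 / 4 + c^2)"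
proof -
  have "eigenvalues (sym_mat2 a c e) = {(a + e)/2 - sqrt ((a - e)^2 / 4 + c^2), (a + e)/2 + sqrt ((a - e)^2 / 4 + c^2)}"
    unfolding eigenvalues_def eigenvalue_sym_mat2_iff[OF assms] sym_mat2_characteristic_eq_iff by auto
  then show ?thesis by (simp add: lambda_min_def min_def)
qed

lemma lambda_min_sym_mat2_pos:
  assumes "c \<noteq> 0" "a > 0" "a * e > c^2"
  shows "lambda_min (sym_mat2 a c e) > 0"
proof -
  have "a * e > 0" using assms(3) zero_le_power2[of c] by linarith
  then have "e > 0" using \<open>a > 0\<close> by (rule zero_less_mult_pos)
  have "(a - e)^2 / 4 + c^2 < ((a + e)/2)^2" using assms(3) by (simp add: power2_eq_square field_simps)
  then have "sqrt ((a - e)^2 / 4 + c^2) < (a + e)/2"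
    using \<open>a > 0\<close> \<open>e > 0\<close> by (intro real_less_lsqrt) auto
  then show ?thesis by (simp add: lambda_min_sym_mat2[OF assms(1)])
qed

lemma quadratic_form_sym_mat2_ge_lambda_min:
  assumes c: "c \<noteq> 0"
  shows "z \<bullet> (sym_mat2 a c e *v z) \<ge> lambda_min (sym_mat2 a c e) * (norm z)^2"
proof -
  define l where "l = lambda_min (sym_mat2 a c e)"
  have root: "(a - l) * (e - l) = c^2"
    unfolding l_def lambda_min_sym_mat2[OF c] sym_mat2_characteristic_eq_iff by simp
  have "\<bar>a - e\<bar> / 2 \<le> sqrt ((a - e)^2 / 4 + c^2)"
    by (rule real_le_rsqrt) (simp add: power_divide)
  then have "e - a \<le> 2 * sqrt ((a - e)^2 / 4 + c^2)" by (simp add: abs_le_iff)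
  then have "l \<le> a" unfolding l_def lambda_min_sym_mat2[OF c] by (simp add: field_simps)
  define Q where "Q = (a - l) * (z$1)^2 + 2 * c * z$1 * z$2 + (e - l) * (z$2)^2"
  have "(a - l) * Q - ((a - l) * z$1 + c * z$2)^2 = ((a - l) * (e - l) - c^2) * (z$2)^2"
    by (simp add: Q_def power2_eq_square algebra_simps)
  then have "(a - l) * Q \<ge> 0" using root by simp
  moreover have "a - l > 0" using \<open>l \<le> a\<close> root c by (cases "l = a") auto
  ultimately have "Q \<ge> 0" by (simp add: zero_le_mult_iff)
  then show ?thesis
    unfolding l_def[symmetric] inner_sym_mat2 norm_power2_vec2 Q_def by (simp add: algebra_simps)
qed

lemma pos_def_if_coercive:
  assumes "l > 0" "\<And>z. z \<bullet> (P *v z) \<ge> l * (norm z)^2"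
  shows "pos_def P"
  unfolding pos_def_def
  by (metis assms mult_pos_pos zero_less_norm_iff zero_less_power order_less_le_trans)

lemma Pmat_sym_mat2: "Pmat \<omega>0 \<alpha> = sym_mat2 (\<alpha>/(4*\<omega>0^2) + 2/\<alpha>) (1/(2*\<omega>0)) (2/\<alpha>)"
  by (simp add: Pmat_def sym_mat2_def)

lemma Pmat_lyapunov:
  assumes "\<omega>0 > 0" "\<alpha> > 0"
  shows "Pmat \<omega>0 \<alpha> ** (J0 \<omega>0 + Lam \<alpha>) + transpose (J0 \<omega>0 + Lam \<alpha>) ** Pmat \<omega>0 \<alpha> = - mat 1"
  using assms
  by (simp add: Pmat_def J0_def Lam_def vec_eq_iff forall_2 transpose_def matrix_matrix_mult_def
      sum_2 mat_def field_simps power2_eq_square)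

lemma lambda_min_Pmat_pos:
  assumes "\<omega>0 > 0" "\<alpha> > 0"
  shows "lambda_min (Pmat \<omega>0 \<alpha>) > 0"
  unfolding Pmat_sym_mat2 using assms
  by (intro lambda_min_sym_mat2_pos) (auto simp: field_simps power2_eq_square add_pos_pos)

theorem mainTheorem4:
  fixes \<omega>0 \<alpha> \<omega>d :: real
  assumes "\<omega>0 > 0" "\<alpha> > 0" "\<omega>d > 0"
  defines "A \<equiv> J0 \<omega>0 + Lam \<alpha>"
      and "P \<equiv> Pmat \<omega>0 \<alpha>"
      and "G \<equiv> Pmat \<omega>0 \<alpha> ** Lam \<alpha> + transpose (Lam \<alpha>) ** Pmat \<omega>0 \<alpha>"
  defines "b \<equiv> (spec_norm G)^2 / (2 * lambda_min P)"
  defines "V \<equiv> (\<lambda>(z::real^2, d::real). ln (1 + z \<bullet> (P *v z)) + b / \<omega>d * (exp d - d - 1))"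
      and "F \<equiv> (\<lambda>(z::real^2, d::real). (A *v z + (exp d - 1) *\<^sub>R (Lam \<alpha> *v z), - \<omega>d * (exp d - 1)))"
  shows "transpose P = P \<and> pos_def P \<and> P ** A + transpose A ** P = - mat 1 \<and>
         (\<forall>z d. \<exists>V'. (V has_derivative V') (at (z, d)) \<and>
            V' (F (z, d)) \<le> (- (1/2) * (norm z)^2 - b * (exp d - 1)^2) / (1 + z \<bullet> (P *v z)))"
proof -
  have lyap: "P ** A + transpose A ** P = - mat 1"
    using Pmat_lyapunov[OF assms(1,2)] by (simp add: P_def A_def)
  have l: "lambda_min P > 0" using lambda_min_Pmat_pos[OF assms(1,2)] by (simp add: P_def)
  have coercive: "z \<bullet> (P *v z) \<ge> lambda_min P * (norm z)^2" for z
    unfolding P_def Pmat_sym_mat2 using assms(1) by (intro quadratic_form_sym_mat2_ge_lambda_min) simp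
  have "\<exists>V'. (V has_derivative V') (at (z, d)) \<and>
          V' (F (z, d)) \<le> (- (1/2) * (norm z)^2 - b * (exp d - 1)^2) / (1 + z \<bullet> (P *v z))" for z d
    using log_lyapunov_derivative_bound[OF lyap coercive l assms(3), of "Lam \<alpha>" z d]
    unfolding V_def F_def b_def G_def P_def spec_norm_def case_prod_conv .
  moreover have "transpose P = P" by (simp add: P_def Pmat_sym_mat2 transpose_sym_mat2)
  moreover have "pos_def P" using l coercive by (rule pos_def_if_coercive)
  ultimately show ?thesis using lyap by blast
qed

end
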